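(* Let $r\ge 1$, let $M=(v_1,\dots,v_n)$ be a finite list of nonzero vectors generating $\mathbb{F}_2^r$, and let $G=G(\mathbb{F}_2^r,M)$. Let $c_1(G)$ be the largest invariant factor (the exponent) of the sandpile group $K(G)$. Then $$c_1(G)\ \Big|\ 2^{r-2}\operatorname{lcm}\{\lambda_u : u\in\mathbb{F}_2^r\setminus\{0\}\},$$ where $\lambda_u=n-\sum_{i=1}^n(-1)^{u\cdot v_i}$.
   Context: The Cayley graph $G$ has vertex set $\mathbb{F}_2^r$ and Laplacian $L(G)$ indexed by $\mathbb{F}_2^r$ with $L(G)_{u,u}=n$ and $L(G)_{u,w}=-\#\{i:u+v_i=w\}$ for $u\ne w$; $\operatorname{coker}L(G)\cong\mathbb{Z}\oplus K(G)$ with $K(G)$ finite abelian (the sandpile group). The numbers $\lambda_u$, $u\in\mathbb{F}_2^r$, are the eigenvalues of $L(G)$ (with eigenvector $\sum_{w}(-1)^{u\cdot w}e_w$); $\lambda_0=0$ and $\lambda_u=2\#\{i: u\cdot v_i=1\}>0$ for $u\neq0$, so the right-hand side is an integer. *)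

theory Defs
  imports Main
begin

text \<open>Vectors of F_2^r are modelled as functions nat => bool vanishing (False) at indices >= r.\<close>

definition f2vecs :: "nat \<Rightarrow> (nat \<Rightarrow> bool) set" where
  "f2vecs r = {v. \<forall>i. r \<le> i \<longrightarrow> \<not> v i}"

definition f2zero :: "nat \<Rightarrow> bool" where
  "f2zero = (\<lambda>_. False)"

definition f2add :: "(nat \<Rightarrow> bool) \<Rightarrow> (nat \<Rightarrow> bool) \<Rightarrow> (nat \<Rightarrow> bool)" where
  "f2add u w = (\<lambda>i. u i \<noteq> w i)"

definition f2dot :: "nat \<Rightarrow> (nat \<Rightarrow> bool) \<Rightarrow> (nat \<Rightarrow> bool) \<Rightarrow> bool" where
  "f2dot r u w = odd (card {i. i < r \<and> u i \<and> w i})"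

definition f2sum :: "(nat \<Rightarrow> bool) list \<Rightarrow> nat set \<Rightarrow> (nat \<Rightarrow> bool)" where
  "f2sum M S = (\<lambda>j. odd (card {i \<in> S. (M ! i) j}))"

definition f2generates :: "nat \<Rightarrow> (nat \<Rightarrow> bool) list \<Rightarrow> bool" where
  "f2generates r M \<longleftrightarrow> (\<forall>w \<in> f2vecs r. \<exists>S \<subseteq> {..<length M}. w = f2sum M S)"

text \<open>Laplacian of the Cayley graph G(F_2^r, M).\<close>
definition cay_lap :: "(nat \<Rightarrow> bool) list \<Rightarrow> (nat \<Rightarrow> bool) \<Rightarrow> (nat \<Rightarrow> bool) \<Rightarrow> int" where
  "cay_lap M u w =
     (if u = w then int (length M)
      else - int (card {i. i < length M \<and> f2add u (M ! i) = w}))"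

definition in_lap_image :: "nat \<Rightarrow> (nat \<Rightarrow> bool) list \<Rightarrow> ((nat \<Rightarrow> bool) \<Rightarrow> int) \<Rightarrow> bool" where
  "in_lap_image r M x \<longleftrightarrow>
     (\<exists>g. \<forall>u \<in> f2vecs r. x u = (\<Sum>w \<in> f2vecs r. cay_lap M u w * g w))"

text \<open>x represents an element of the torsion subgroup K(G) of coker L(G).\<close>
definition sandpile_elem :: "nat \<Rightarrow> (nat \<Rightarrow> bool) list \<Rightarrow> ((nat \<Rightarrow> bool) \<Rightarrow> int) \<Rightarrow> bool" where
  "sandpile_elem r M x \<longleftrightarrow> (\<exists>k::int. k > 0 \<and> in_lap_image r M (\<lambda>u. k * x u))"

definition sandpile_exponent :: "nat \<Rightarrow> (nat \<Rightarrow> bool) list \<Rightarrow> nat" where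
  "sandpile_exponent r M =
     (LEAST m::nat. m > 0 \<and>
        (\<forall>x. sandpile_elem r M x \<longrightarrow> in_lap_image r M (\<lambda>u. int m * x u)))"

definition cay_eig :: "nat \<Rightarrow> (nat \<Rightarrow> bool) list \<Rightarrow> (nat \<Rightarrow> bool) \<Rightarrow> int" where
  "cay_eig r M u =
     int (length M) - (\<Sum>i<length M. if f2dot r u (M ! i) then -1 else 1)"

end

theory Submission
  imports Defs
begin

text \<open>The characters chi_u(w) = (-1)^(u.w) of F_2^r are eigenvectors of L(G) with eigenvalues
lambda_u, and by orthogonality Fourier inversion holds with the factor 2^r. Let m be a common
multiple of the nonzero lambda_u and let x represent an element of K(G). Then the entries of x sum
to 0, so its Fourier coefficients y_u vanish at u = 0 and are all even, and
z = sum over u of (m / lambda_u) y_u chi_u satisfies L z = 2^r m x. Since chi_u is odd and y_u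
even, z is constant modulo 4; subtracting that constant, which L kills, and dividing by 4 gives a
preimage of 2^(r-2) m x under L.\<close>

lemma bij_betw_f2vecs_Pow: "bij_betw (\<lambda>v. {i. v i}) (f2vecs r) (Pow {..<r})"
  by (rule bij_betw_byWitness[where f' = "\<lambda>S i. i \<in> S"])
    (auto simp: f2vecs_def not_le[symmetric])

lemma card_f2vecs: "card (f2vecs r) = 2 ^ r"
  using bij_betw_same_card[OF bij_betw_f2vecs_Pow] by (simp add: card_Pow)

lemma finite_f2vecs: "finite (f2vecs r)"
  using card_f2vecs[of r] by (intro card_ge_0_finite) simp

lemma f2add_in_f2vecs: "a \<in> f2vecs r \<Longrightarrow> b \<in> f2vecs r \<Longrightarrow> f2add a b \<in> f2vecs r"
  by (simp add: f2vecs_def f2add_def)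

lemma f2add_eq_zero_iff: "f2add a b = f2zero \<longleftrightarrow> a = b"
  by (auto simp: f2add_def f2zero_def fun_eq_iff)

lemma f2add_eq_self_iff: "f2add a b = a \<longleftrightarrow> b = f2zero"
  by (auto simp: f2add_def f2zero_def fun_eq_iff)

lemma f2add_f2add_cancel: "f2add (f2add a b) b = a"
  by (auto simp: f2add_def fun_eq_iff)

lemma sum_f2add_shift:
  assumes "b \<in> f2vecs r"
  shows "(\<Sum>a\<in>f2vecs r. g (f2add a b)) = (\<Sum>a\<in>f2vecs r. g a)"
proof -
  have "bij_betw (\<lambda>a. f2add a b) (f2vecs r) (f2vecs r)"
    by (rule bij_betw_byWitness[where f' = "\<lambda>a. f2add a b"])
      (use assms in \<open>auto simp: f2add_f2add_cancel f2add_in_f2vecs\<close>)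
  then show ?thesis
    by (rule sum.reindex_bij_betw)
qed

definition f2char :: "nat \<Rightarrow> (nat \<Rightarrow> bool) \<Rightarrow> (nat \<Rightarrow> bool) \<Rightarrow> int" where
  "f2char r u w = (\<Prod>i<r. if u i \<and> w i then -1 else 1)"

lemma f2char_eq_f2dot: "f2char r u w = (if f2dot r u w then -1 else 1)"
proof -
  have "f2char r u w = (\<Prod>i\<in>{..<r} \<inter> {i. u i \<and> w i}. -1) * (\<Prod>i\<in>{..<r} \<inter> - {i. u i \<and> w i}. 1)"
    unfolding f2char_def by (rule prod.If_cases) simp
  also have "\<dots> = (-1) ^ card {i. i < r \<and> u i \<and> w i}"
    by (simp add: Int_def conj_commute)
  finally show ?thesis
    by (simp add: f2dot_def)
qed

lemma f2char_commute: "f2char r u w = f2char r w u"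
  by (simp add: f2char_def conj_commute)

lemma f2char_f2add: "f2char r u (f2add a b) = f2char r u a * f2char r u b"
  unfolding f2char_def f2add_def prod.distrib[symmetric]
  by (rule prod.cong) auto

lemma f2char_f2add_left: "f2char r (f2add a b) w = f2char r a w * f2char r b w"
  using f2char_f2add f2char_commute by metis

lemma f2char_zero_left [simp]: "f2char r f2zero w = 1"
  by (simp add: f2char_def f2zero_def)

lemma f2char_zero_right [simp]: "f2char r u f2zero = 1"
  by (simp add: f2char_def f2zero_def)

lemma f2char_minus_one_even: "2 dvd f2char r u w - 1"
  by (simp add: f2char_eq_f2dot)

lemma sum_f2char_nonzero:
  assumes "w \<in> f2vecs r" "w \<noteq> f2zero"
  shows "(\<Sum>u\<in>f2vecs r. f2char r u w) = 0"
proof -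
  obtain j where "w j"
    using assms(2) by (auto simp: f2zero_def)
  with assms(1) have "j < r"
    by (auto simp: f2vecs_def not_le[symmetric])
  define e where "e = (\<lambda>i. i = j)"
  have e: "e \<in> f2vecs r"
    using \<open>j < r\<close> by (auto simp: e_def f2vecs_def)
  have "f2char r e w = (\<Prod>i<r. if i = j then -1 else 1)"
    unfolding f2char_def by (rule prod.cong) (auto simp: e_def \<open>w j\<close>)
  then have "f2char r e w = -1"
    using \<open>j < r\<close> by simp
  then have "(\<Sum>u\<in>f2vecs r. f2char r (f2add u e) w) = - (\<Sum>u\<in>f2vecs r. f2char r u w)"
    by (simp add: f2char_f2add_left sum_negf)
  then show ?thesis
    using sum_f2add_shift[OF e, of "\<lambda>u. f2char r u w"] by simp
qed

lemma sum_f2char: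
  "w \<in> f2vecs r \<Longrightarrow> (\<Sum>u\<in>f2vecs r. f2char r u w) = (if w = f2zero then 2 ^ r else 0)"
  using sum_f2char_nonzero[of w r] by (simp add: card_f2vecs)

lemma f2_fourier_inversion:
  fixes x :: "(nat \<Rightarrow> bool) \<Rightarrow> int"
  assumes a: "a \<in> f2vecs r"
  shows "(\<Sum>u\<in>f2vecs r. f2char r u a * (\<Sum>v\<in>f2vecs r. f2char r u v * x v)) = 2 ^ r * x a"
proof -
  have "(\<Sum>u\<in>f2vecs r. f2char r u a * (\<Sum>v\<in>f2vecs r. f2char r u v * x v))
      = (\<Sum>u\<in>f2vecs r. \<Sum>v\<in>f2vecs r. f2char r u (f2add a v) * x v)"
    by (simp add: sum_distrib_left f2char_f2add mult.assoc)
  also have "\<dots> = (\<Sum>v\<in>f2vecs r. (\<Sum>u\<in>f2vecs r. f2char r u (f2add a v)) * x v)"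
    by (subst sum.swap) (simp add: sum_distrib_right)
  also have "\<dots> = (\<Sum>v\<in>f2vecs r. if v = a then 2 ^ r * x a else 0)"
    by (rule sum.cong) (auto simp: sum_f2char a f2add_in_f2vecs f2add_eq_zero_iff)
  also have "\<dots> = 2 ^ r * x a"
    using a finite_f2vecs by simp
  finally show ?thesis .
qed

lemma f2_fourier_coeff_even:
  fixes x :: "(nat \<Rightarrow> bool) \<Rightarrow> int"
  assumes "(\<Sum>v\<in>f2vecs r. x v) = 0"
  shows "2 dvd (\<Sum>v\<in>f2vecs r. f2char r u v * x v)"
proof -
  have "(\<Sum>v\<in>f2vecs r. f2char r u v * x v) = (\<Sum>v\<in>f2vecs r. (f2char r u v - 1) * x v)"
    using assms by (simp add: algebra_simps sum_subtractf)
  also have "2 dvd \<dots>"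
    by (intro dvd_sum dvd_mult2 f2char_minus_one_even)
  finally show ?thesis .
qed


lemma cay_lap_eq:
  assumes "\<forall>v \<in> set M. v \<noteq> f2zero"
  shows "cay_lap M u w =
    (if u = w then int (length M) else 0) - int (card {i \<in> {..<length M}. f2add u (M ! i) = w})"
proof (cases "u = w")
  case True
  have "{i \<in> {..<length M}. f2add u (M ! i) = u} = {}"
    using assms by (auto simp: f2add_eq_self_iff)
  with True show ?thesis
    by (simp add: cay_lap_def)
qed (simp add: cay_lap_def)

lemma cay_lap_row:
  assumes M: "set M \<subseteq> f2vecs r" "\<forall>v \<in> set M. v \<noteq> f2zero" and a: "a \<in> f2vecs r"
  shows "(\<Sum>w\<in>f2vecs r. cay_lap M a w * g w) =
    int (length M) * g a - (\<Sum>i<length M. g (f2add a (M ! i)))"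
proof -
  have "f2add a ` (\<lambda>i. M ! i) ` {..<length M} \<subseteq> f2vecs r"
    using M(1) a nth_mem by (blast intro: f2add_in_f2vecs)
  then have "(\<Sum>i<length M. g (f2add a (M ! i))) =
      (\<Sum>w\<in>f2vecs r. int (card {i \<in> {..<length M}. f2add a (M ! i) = w}) * g w)"
    using sum_fun_comp[of "{..<length M}" "f2vecs r" "\<lambda>i. f2add a (M ! i)" g]
    by (simp add: finite_f2vecs image_image)
  moreover have "cay_lap M a w * g w = (if a = w then int (length M) * g w else 0) -
      int (card {i \<in> {..<length M}. f2add a (M ! i) = w}) * g w" for w
    by (simp add: cay_lap_eq[OF M(2)] left_diff_distrib)
  ultimately show ?thesis
    using a by (simp add: sum_subtractf finite_f2vecs)
qed

lemma cay_lap_commute: "cay_lap M u w = cay_lap M w u"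
proof -
  have "{i. i < length M \<and> f2add u (M ! i) = w} = {i. i < length M \<and> f2add w (M ! i) = u}"
    by (auto simp: f2add_def fun_eq_iff)
  then show ?thesis
    by (simp add: cay_lap_def)
qed

lemma cay_lap_row_sum:
  assumes "set M \<subseteq> f2vecs r" "\<forall>v \<in> set M. v \<noteq> f2zero" "a \<in> f2vecs r"
  shows "(\<Sum>w\<in>f2vecs r. cay_lap M a w) = 0"
  using cay_lap_row[OF assms, of "\<lambda>_. 1"] by simp

lemma cay_eig_eq_f2char: "cay_eig r M u = int (length M) - (\<Sum>i<length M. f2char r u (M ! i))"
  by (simp add: cay_eig_def f2char_eq_f2dot)

lemma cay_eig_even: "2 dvd cay_eig r M u"
proof -
  have "cay_eig r M u = - (\<Sum>i<length M. f2char r u (M ! i) - 1)"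
    by (simp add: cay_eig_eq_f2char sum_subtractf)
  also have "2 dvd \<dots>"
    by (simp only: dvd_minus_iff) (intro dvd_sum f2char_minus_one_even)
  finally show ?thesis .
qed

lemma cay_lap_f2char:
  assumes "set M \<subseteq> f2vecs r" "\<forall>v \<in> set M. v \<noteq> f2zero" "a \<in> f2vecs r"
  shows "(\<Sum>w\<in>f2vecs r. cay_lap M a w * f2char r u w) = cay_eig r M u * f2char r u a"
  by (simp add: cay_lap_row[OF assms] cay_eig_eq_f2char f2char_f2add algebra_simps sum_distrib_left)

lemma cay_lap_fourier_series:
  assumes "set M \<subseteq> f2vecs r" "\<forall>v \<in> set M. v \<noteq> f2zero" "a \<in> f2vecs r"
  shows "(\<Sum>w\<in>f2vecs r. cay_lap M a w * (\<Sum>u\<in>f2vecs r. f2char r u w * c u)) =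
    (\<Sum>u\<in>f2vecs r. cay_eig r M u * f2char r u a * c u)"
proof -
  have "(\<Sum>w\<in>f2vecs r. cay_lap M a w * (\<Sum>u\<in>f2vecs r. f2char r u w * c u)) =
      (\<Sum>w\<in>f2vecs r. \<Sum>u\<in>f2vecs r. cay_lap M a w * f2char r u w * c u)"
    by (simp add: sum_distrib_left mult.assoc)
  also have "\<dots> = (\<Sum>u\<in>f2vecs r. \<Sum>w\<in>f2vecs r. cay_lap M a w * f2char r u w * c u)"
    by (rule sum.swap)
  also have "\<dots> = (\<Sum>u\<in>f2vecs r. cay_eig r M u * f2char r u a * c u)"
    by (simp add: sum_distrib_right[symmetric] cay_lap_f2char[OF assms])
  finally show ?thesis .
qed

lemma in_lap_image_sum_eq_zero:
  assumes "set M \<subseteq> f2vecs r" "\<forall>v \<in> set M. v \<noteq> f2zero" "in_lap_image r M x"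
  shows "(\<Sum>a\<in>f2vecs r. x a) = 0"
proof -
  obtain g where g: "\<And>a. a \<in> f2vecs r \<Longrightarrow> x a = (\<Sum>w\<in>f2vecs r. cay_lap M a w * g w)"
    using assms(3) by (auto simp: in_lap_image_def)
  have "(\<Sum>a\<in>f2vecs r. x a) = (\<Sum>a\<in>f2vecs r. \<Sum>w\<in>f2vecs r. cay_lap M a w * g w)"
    by (simp add: g)
  also have "\<dots> = (\<Sum>w\<in>f2vecs r. (\<Sum>a\<in>f2vecs r. cay_lap M w a) * g w)"
    by (subst sum.swap) (simp add: sum_distrib_right cay_lap_commute)
  also have "\<dots> = 0"
    by (simp add: cay_lap_row_sum[OF assms(1,2)])
  finally show ?thesis .
qed

lemma sandpile_elem_sum_eq_zero:
  assumes "set M \<subseteq> f2vecs r" "\<forall>v \<in> set M. v \<noteq> f2zero" "sandpile_elem r M x"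
  shows "(\<Sum>a\<in>f2vecs r. x a) = 0"
proof -
  obtain k where "k > 0" "in_lap_image r M (\<lambda>a. k * x a)"
    using assms(3) by (auto simp: sandpile_elem_def)
  then have "k * (\<Sum>a\<in>f2vecs r. x a) = 0"
    using in_lap_image_sum_eq_zero[OF assms(1,2)] by (simp add: sum_distrib_left)
  with \<open>k > 0\<close> show ?thesis
    by simp
qed

lemma in_lap_image_lincomb:
  assumes "in_lap_image r M x" "in_lap_image r M y"
  shows "in_lap_image r M (\<lambda>u. a * x u + b * y u)"
proof -
  obtain g h where
    "\<forall>u\<in>f2vecs r. x u = (\<Sum>w\<in>f2vecs r. cay_lap M u w * g w)"
    "\<forall>u\<in>f2vecs r. y u = (\<Sum>w\<in>f2vecs r. cay_lap M u w * h w)"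
    using assms by (auto simp: in_lap_image_def)
  then have "\<forall>u\<in>f2vecs r. a * x u + b * y u =
      (\<Sum>w\<in>f2vecs r. cay_lap M u w * (a * g w + b * h w))"
    by (simp add: algebra_simps sum.distrib sum_distrib_left)
  then show ?thesis
    by (auto simp: in_lap_image_def)
qed

lemma Least_dvd_if_gcd_closed:
  fixes P :: "nat \<Rightarrow> bool"
  assumes "P n" and pos: "\<And>m. P m \<Longrightarrow> m > 0" and gcd: "\<And>a b. P a \<Longrightarrow> P b \<Longrightarrow> P (gcd a b)"
  shows "Least P dvd n"
proof -
  have "P (Least P)"
    using \<open>P n\<close> by (rule LeastI)
  then have "P (gcd (Least P) n)"
    using \<open>P n\<close> by (rule gcd)
  then have "Least P \<le> gcd (Least P) n"
    by (rule Least_le)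
  moreover have "gcd (Least P) n \<le> Least P"
    using pos[OF \<open>P (Least P)\<close>] by (simp add: gcd_le1_nat)
  ultimately show ?thesis
    by (metis gcd_dvd2 order_antisym)
qed

lemma sandpile_exponent_dvd:
  assumes "N > 0" and "\<forall>x. sandpile_elem r M x \<longrightarrow> in_lap_image r M (\<lambda>u. int N * x u)"
  shows "sandpile_exponent r M dvd N"
  unfolding sandpile_exponent_def
proof (rule Least_dvd_if_gcd_closed)
  fix a b :: nat
  assume a: "a > 0 \<and> (\<forall>x. sandpile_elem r M x \<longrightarrow> in_lap_image r M (\<lambda>u. int a * x u))"
    and b: "b > 0 \<and> (\<forall>x. sandpile_elem r M x \<longrightarrow> in_lap_image r M (\<lambda>u. int b * x u))"
  obtain s t where st: "s * int a + t * int b = int (gcd a b)"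
    using bezout_int[of "int a" "int b"] by auto
  have "in_lap_image r M (\<lambda>u. int (gcd a b) * x u)" if "sandpile_elem r M x" for x
    using in_lap_image_lincomb[of r M "\<lambda>u. int a * x u" "\<lambda>u. int b * x u" s t] a b that
    by (simp add: st[symmetric] algebra_simps)
  then show "gcd a b > 0 \<and> (\<forall>x. sandpile_elem r M x \<longrightarrow> in_lap_image r M (\<lambda>u. int (gcd a b) * x u))"
    using a by simp
qed (use assms in auto)

lemma in_lap_image_if_scaled_preimage:
  assumes M: "set M \<subseteq> f2vecs r" "\<forall>v \<in> set M. v \<noteq> f2zero" and "d \<noteq> 0"
    and preimage: "\<And>a. a \<in> f2vecs r \<Longrightarrow> (\<Sum>w\<in>f2vecs r. cay_lap M a w * z w) = d * t a"
    and congruent: "\<And>w. w \<in> f2vecs r \<Longrightarrow> d dvd z w - z f2zero"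
  shows "in_lap_image r M t"
  unfolding in_lap_image_def
proof (intro exI ballI)
  fix a
  assume a: "a \<in> f2vecs r"
  have "d * (\<Sum>w\<in>f2vecs r. cay_lap M a w * ((z w - z f2zero) div d)) =
      (\<Sum>w\<in>f2vecs r. cay_lap M a w * (z w - z f2zero))"
    unfolding sum_distrib_left by (intro sum.cong) (simp_all add: congruent mult.left_commute)
  also have "\<dots> = (\<Sum>w\<in>f2vecs r. cay_lap M a w * z w) - z f2zero * (\<Sum>w\<in>f2vecs r. cay_lap M a w)"
    by (simp add: right_diff_distrib sum_subtractf sum_distrib_left mult.commute)
  also have "\<dots> = d * t a"
    by (simp add: preimage a cay_lap_row_sum[OF M a])
  finally show "t a = (\<Sum>w\<in>f2vecs r. cay_lap M a w * ((z w - z f2zero) div d))"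
    using \<open>d \<noteq> 0\<close> by simp
qed

lemma sandpile_elem_scaled_in_lap_image:
  assumes M: "set M \<subseteq> f2vecs r" "\<forall>v \<in> set M. v \<noteq> f2zero"
    and eig_dvd: "\<And>u. u \<in> f2vecs r - {f2zero} \<Longrightarrow> cay_eig r M u dvd m"
    and t: "4 * t = 2 ^ r * m"
    and x: "sandpile_elem r M x"
  shows "in_lap_image r M (\<lambda>a. t * x a)"
proof -
  let ?V = "f2vecs r"
  define y where "y u = (\<Sum>v\<in>?V. f2char r u v * x v)" for u
  define c where "c u = (if u = f2zero then 0 else m div cay_eig r M u * y u)" for u
  define z where "z w = (\<Sum>u\<in>?V. f2char r u w * c u)" for w
  have sum_x: "(\<Sum>v\<in>?V. x v) = 0"
    by (rule sandpile_elem_sum_eq_zero[OF M x])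
  have eig_c: "cay_eig r M u * c u = m * y u" if "u \<in> ?V" for u
    using that eig_dvd[of u] sum_x by (auto simp: c_def y_def)
  have "(\<Sum>w\<in>?V. cay_lap M a w * z w) = 4 * (t * x a)" if a: "a \<in> ?V" for a
  proof -
    have "(\<Sum>w\<in>?V. cay_lap M a w * z w) = (\<Sum>u\<in>?V. f2char r u a * (cay_eig r M u * c u))"
      unfolding z_def cay_lap_fourier_series[OF M a] by (simp add: algebra_simps)
    also have "\<dots> = (\<Sum>u\<in>?V. f2char r u a * (m * y u))"
      by (rule sum.cong) (simp_all add: eig_c)
    also have "\<dots> = m * (\<Sum>u\<in>?V. f2char r u a * y u)"
      by (simp add: sum_distrib_left mult.left_commute)
    also have "\<dots> = 4 * (t * x a)"
      unfolding y_def f2_fourier_inversion[OF a] using t by simp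
    finally show ?thesis .
  qed
  moreover have "4 dvd z w - z f2zero" for w
  proof -
    have "2 dvd c u" for u
      using f2_fourier_coeff_even[OF sum_x] by (simp add: c_def y_def)
    then have "(2 * 2) dvd (f2char r u w - 1) * c u" for u
      by (intro mult_dvd_mono f2char_minus_one_even)
    moreover have "z w - z f2zero = (\<Sum>u\<in>?V. (f2char r u w - 1) * c u)"
      by (simp add: z_def algebra_simps sum_subtractf)
    ultimately show ?thesis
      by (simp add: dvd_sum)
  qed
  ultimately show ?thesis
    by (intro in_lap_image_if_scaled_preimage[OF M, of 4 z]) simp_all
qed

theorem mainTheorem6:
  fixes r :: nat and M :: "(nat \<Rightarrow> bool) list"
  assumes "r \<ge> 1"
    and "set M \<subseteq> f2vecs r"
    and "\<forall>v \<in> set M. v \<noteq> f2zero"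
    and "f2generates r M"
  shows "2 * int (sandpile_exponent r M) dvd
           2 ^ (r - 1) * Lcm (cay_eig r M ` (f2vecs r - {f2zero}))"
proof -
  define m where "m = Lcm (cay_eig r M ` (f2vecs r - {f2zero}))"
  have eig_dvd: "cay_eig r M u dvd m" if "u \<in> f2vecs r - {f2zero}" for u
    unfolding m_def using that by (rule dvd_Lcm[OF imageI])
  have "(\<lambda>i. i = 0) \<in> f2vecs r - {f2zero}"
    using \<open>r \<ge> 1\<close> by (auto simp: f2vecs_def f2zero_def fun_eq_iff)
  then have "2 dvd m"
    using cay_eig_even eig_dvd dvd_trans by blast
  then obtain l where l: "m = 2 * l" ..
  have "m \<ge> 0"
    unfolding m_def by (rule Lcm_int_greater_eq_0)
  with l have "l \<ge> 0"
    by simp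
  define N where "N = nat (2 ^ (r - 1) * l)"
  have int_N: "int N = 2 ^ (r - 1) * l"
    using \<open>l \<ge> 0\<close> by (simp add: N_def)
  have "4 * int N = 2 ^ r * m"
    using \<open>r \<ge> 1\<close> by (simp add: int_N l power_eq_if)
  have "2 * int N = 2 ^ (r - 1) * m"
    by (simp add: int_N l mult.left_commute)
  show ?thesis
  proof (cases "l = 0")
    case False
    then have "sandpile_exponent r M dvd N"
      using sandpile_elem_scaled_in_lap_image[OF assms(2,3) eig_dvd \<open>4 * int N = 2 ^ r * m\<close>]
        \<open>l \<ge> 0\<close>
      by (intro sandpile_exponent_dvd) (auto simp: N_def)
    then have "2 * int (sandpile_exponent r M) dvd 2 * int N"
      by simp
    then show ?thesis
      unfolding m_def[symmetric] \<open>2 * int N = 2 ^ (r - 1) * m\<close> .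
  qed (simp add: l m_def[symmetric])
qed

end
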